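(* Let $G$ be a finite group such that $|Z(G)|$ has at least two distinct prime divisors. Then the difference graph $\mathcal{D}(G)$ is bipartite if and only if $G\cong\mathbb{Z}_{p^{\alpha}q}$, where $p,q$ are distinct primes and $\alpha\ge 1$.
   Context: For a finite group $G$ with identity $e$: the intersection power graph $\mathcal{G}_I(G)$ has vertex set $G$, two distinct non-identity vertices $x,y$ being adjacent iff $\langle x\rangle\cap\langle y\rangle\neq\{e\}$, and $e$ being adjacent to every other vertex. The power graph $\mathcal{P}(G)$ has vertex set $G$, two distinct vertices being adjacent iff one is a power of the other. The difference graph $\mathcal{D}(G)$ is the graph on vertex set $G$ with edge set $E(\mathcal{G}_I(G))\setminus E(\mathcal{P}(G))$, with all isolated vertices removed. $Z(G)$ denotes the center of $G$. *)

theory Defs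
  imports "HOL-Algebra.Algebra" "HOL-Computational_Algebra.Primes"
begin

definition group_center :: "('a, 'b) monoid_scheme \<Rightarrow> 'a set" where
  "group_center G = {z \<in> carrier G. \<forall>g \<in> carrier G. z \<otimes>\<^bsub>G\<^esub> g = g \<otimes>\<^bsub>G\<^esub> z}"

definition ipg_edge :: "('a, 'b) monoid_scheme \<Rightarrow> 'a \<Rightarrow> 'a \<Rightarrow> bool" where
  "ipg_edge G x y \<longleftrightarrow> x \<in> carrier G \<and> y \<in> carrier G \<and> x \<noteq> y \<and>
     (x = \<one>\<^bsub>G\<^esub> \<or> y = \<one>\<^bsub>G\<^esub> \<or>
      generate G {x} \<inter> generate G {y} \<noteq> {\<one>\<^bsub>G\<^esub>})"

definition pg_edge :: "('a, 'b) monoid_scheme \<Rightarrow> 'a \<Rightarrow> 'a \<Rightarrow> bool" where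
  "pg_edge G x y \<longleftrightarrow> x \<in> carrier G \<and> y \<in> carrier G \<and> x \<noteq> y \<and>
     ((\<exists>n::nat. y = x [^]\<^bsub>G\<^esub> n) \<or> (\<exists>n::nat. x = y [^]\<^bsub>G\<^esub> n))"

definition diff_edge :: "('a, 'b) monoid_scheme \<Rightarrow> 'a \<Rightarrow> 'a \<Rightarrow> bool" where
  "diff_edge G x y \<longleftrightarrow> ipg_edge G x y \<and> \<not> pg_edge G x y"

definition diff_vertices :: "('a, 'b) monoid_scheme \<Rightarrow> 'a set" where
  "diff_vertices G = {x \<in> carrier G. \<exists>y. diff_edge G x y}"

definition bipartite :: "'a set \<Rightarrow> ('a \<Rightarrow> 'a \<Rightarrow> bool) \<Rightarrow> bool" where
  "bipartite V E \<longleftrightarrow> (\<exists>A B. A \<inter> B = {} \<and> A \<union> B = V \<and>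
     (\<forall>x \<in> V. \<forall>y \<in> V. E x y \<longrightarrow> (x \<in> A \<and> y \<in> B) \<or> (x \<in> B \<and> y \<in> A)))"

end

theory Submission
  imports Defs
begin

text \<open>Call x a power of y if x lies in the cyclic subgroup generated by y. In a finite group,
  x and y are adjacent in the difference graph iff neither is a power of the other but some
  nontrivial element is a power of both.

  Let a and b be central of prime orders p \<noteq> q. For elements of p-power exponent,
  multiplication by b preserves and reflects being a power, and b is a power of every such
  product. This yields triangles from two elements of order p generating different subgroups,
  from two incomparable p-elements (with third vertex a b), and from an element g of a third
  prime order (the vertices a g, b g, a b). So if the difference graph is bipartite, then
  |G| = p^i q^j, all p-elements are powers of one element u and all q-elements powers of one v.
  Conjugation preserves both sets, so the commutator of u and v lies in both cyclic subgroups and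
  is trivial, and G is cyclic, generated by u v. If both exponents were at least 2, the elements
  of orders p^2, p q^2, p^2 q, q^2, p q would form a 5-cycle.

  Conversely, in the cyclic group of order p^\<alpha> q two residues that are both divisible or
  both indivisible by q generate comparable subgroups, so divisibility by q is a 2-colouring.\<close>

section \<open>Arithmetic of two primes\<close>

lemma mod_inverse_nat:
  fixes k N :: nat
  assumes "coprime k N"
  obtains s where "k * s mod N = 1 mod N"
proof (cases "k = 0")
  case True
  with assms have "N = 1" by simp
  with that show ?thesis by simp
next
  case False
  obtain x y where "k * x = N * y + gcd k N" using bezout_nat[OF False] by blast
  with assms have "k * x = 1 + y * N" by (simp add: mult.commute)
  then have "k * x mod N = 1 mod N" by (metis mod_mult_self1)
  with that show ?thesis .
qed

lemma coprime_add_mult: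
  fixes M N :: nat
  assumes "coprime M N"
  shows "coprime (M + N) (M * N)"
proof -
  have "gcd (M + N) M = 1" using assms by (metis gcd.commute gcd_add2 coprime_iff_gcd_eq_1)
  moreover have "gcd (M + N) N = 1" using assms by (metis gcd_add1 coprime_iff_gcd_eq_1)
  ultimately show ?thesis by (metis coprime_iff_gcd_eq_1 coprime_mult_right_iff)
qed

lemma prime_powers_dvd_iff:
  fixes p q :: nat
  assumes p: "Factorial_Ring.prime p" and q: "Factorial_Ring.prime q" and "p \<noteq> q"
  shows "p ^ a * q ^ b dvd p ^ c * q ^ d \<longleftrightarrow> a \<le> c \<and> b \<le> d"
proof
  assume dvd: "p ^ a * q ^ b dvd p ^ c * q ^ d"
  have coprime: "coprime p q" using primes_coprime assms by blast
  have "p ^ a dvd p ^ c * q ^ d" using dvd dvd_mult_left by blast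
  then have "p ^ a dvd p ^ c" using coprime by (simp add: coprime_dvd_mult_left_iff)
  moreover have "q ^ b dvd p ^ c * q ^ d" using dvd dvd_mult_right by blast
  then have "q ^ b dvd q ^ d" using coprime by (simp add: coprime_commute coprime_dvd_mult_right_iff)
  ultimately show "a \<le> c \<and> b \<le> d"
    using power_dvd_imp_le prime_gt_1_nat p q by blast
next
  assume "a \<le> c \<and> b \<le> d"
  then show "p ^ a * q ^ b dvd p ^ c * q ^ d" by (simp add: le_imp_power_dvd mult_dvd_mono)
qed

lemma prime_powers_product:
  fixes p q n :: nat
  assumes p: "Factorial_Ring.prime p" and q: "Factorial_Ring.prime q" and "p \<noteq> q" and "n \<noteq> 0"
    and factors: "\<And>r. Factorial_Ring.prime r \<Longrightarrow> r dvd n \<Longrightarrow> r = p \<or> r = q"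
  shows "n = p ^ multiplicity p n * q ^ multiplicity q n"
proof -
  have "prime_factors n \<subseteq> {p, q}" using factors by (auto simp: in_prime_factors_iff)
  moreover have "r ^ multiplicity r n = 1" if "r \<in> {p, q} - prime_factors n" for r
    using that p q \<open>n \<noteq> 0\<close> by (auto simp: in_prime_factors_iff not_dvd_imp_multiplicity_0)
  ultimately have "(\<Prod>r\<in>prime_factors n. r ^ multiplicity r n) = (\<Prod>r\<in>{p, q}. r ^ multiplicity r n)"
    by (intro prod.mono_neutral_left) auto
  then show ?thesis using prod_prime_factors[OF \<open>n \<noteq> 0\<close>] \<open>p \<noteq> q\<close> by simp
qed

lemma dvd_prime_power_mult_prime:
  fixes p q d :: nat
  assumes p: "Factorial_Ring.prime p" and q: "Factorial_Ring.prime q" and "d dvd p ^ a * q"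
  obtains e where "d = p ^ e * (if q dvd d then q else 1)"
proof (cases "q dvd d")
  case True
  then obtain d' where d': "d = q * d'" by blast
  with assms have "d' dvd p ^ a" using q by (simp add: mult.commute prime_gt_0_nat)
  then obtain e where "d' = p ^ e" using divides_primepow_nat[OF p] by blast
  with d' True show ?thesis using that[of e] by (simp add: mult.commute)
next
  case False
  then have "coprime d q" using q by (metis prime_imp_coprime coprime_commute)
  then have "d dvd p ^ a" using assms(3) by (simp add: coprime_dvd_mult_left_iff)
  then obtain e where "d = p ^ e" using divides_primepow_nat[OF p] by blast
  with that False show ?thesis by simp
qed

lemma gcd_comparable_prime_power_mult_prime:
  fixes p q n x y :: nat
  assumes p: "Factorial_Ring.prime p" and q: "Factorial_Ring.prime q" and "n = p ^ a * q"
    and same_q: "q dvd x \<longleftrightarrow> q dvd y"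
  shows "gcd x n dvd y \<or> gcd y n dvd x"
proof -
  have q_dvd_gcd: "q dvd gcd k n \<longleftrightarrow> q dvd k" for k using \<open>n = p ^ a * q\<close> by simp
  obtain e1 where e1: "gcd x n = p ^ e1 * (if q dvd x then q else 1)"
    using dvd_prime_power_mult_prime[OF p q, of "gcd x n" a] \<open>n = p ^ a * q\<close> q_dvd_gcd by auto
  obtain e2 where e2: "gcd y n = p ^ e2 * (if q dvd x then q else 1)"
    using dvd_prime_power_mult_prime[OF p q, of "gcd y n" a] \<open>n = p ^ a * q\<close> q_dvd_gcd same_q by auto
  have "gcd x n dvd gcd y n \<or> gcd y n dvd gcd x n"
    unfolding e1 e2 by (cases "e1 \<le> e2") (simp_all add: le_imp_power_dvd)
  then show ?thesis by (meson dvd_trans gcd_dvd1)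
qed

section \<open>Bipartite graphs\<close>

lemma bipartite_two_colouring:
  assumes "bipartite V E"
  obtains A where "\<And>x y. x \<in> V \<Longrightarrow> y \<in> V \<Longrightarrow> E x y \<Longrightarrow> x \<in> A \<longleftrightarrow> y \<notin> A"
proof -
  obtain A B where "A \<inter> B = {}"
    and "\<forall>x\<in>V. \<forall>y\<in>V. E x y \<longrightarrow> x \<in> A \<and> y \<in> B \<or> x \<in> B \<and> y \<in> A"
    using assms unfolding bipartite_def by blast
  then have "x \<in> A \<longleftrightarrow> y \<notin> A" if "x \<in> V" "y \<in> V" "E x y" for x y
    using that by blast
  with that show ?thesis by blast
qed

lemma bipartiteI:
  assumes "\<And>x y. x \<in> V \<Longrightarrow> y \<in> V \<Longrightarrow> E x y \<Longrightarrow> x \<in> A \<longleftrightarrow> y \<notin> A"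
  shows "bipartite V E"
  unfolding bipartite_def
proof (intro exI conjI ballI impI)
  fix x y assume "x \<in> V" "y \<in> V" "E x y"
  with assms show "x \<in> V \<inter> A \<and> y \<in> V - A \<or> x \<in> V - A \<and> y \<in> V \<inter> A" by blast
qed auto

lemma bipartite_no_triangle:
  assumes "bipartite V E" "x \<in> V" "y \<in> V" "z \<in> V" "E x y" "E y z" "E z x"
  shows False
proof -
  obtain A where A: "\<And>x y. x \<in> V \<Longrightarrow> y \<in> V \<Longrightarrow> E x y \<Longrightarrow> x \<in> A \<longleftrightarrow> y \<notin> A"
    using bipartite_two_colouring[OF assms(1)] by blast
  show False using A[OF assms(2,3,5)] A[OF assms(3,4,6)] A[OF assms(4,2,7)] by blast
qed

lemma bipartite_no_pentagon:
  assumes "bipartite V E" "x1 \<in> V" "x2 \<in> V" "x3 \<in> V" "x4 \<in> V" "x5 \<in> V"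
    "E x1 x2" "E x2 x3" "E x3 x4" "E x4 x5" "E x5 x1"
  shows False
proof -
  obtain A where A: "\<And>x y. x \<in> V \<Longrightarrow> y \<in> V \<Longrightarrow> E x y \<Longrightarrow> x \<in> A \<longleftrightarrow> y \<notin> A"
    using bipartite_two_colouring[OF assms(1)] by blast
  show False
    using A[OF assms(2,3,7)] A[OF assms(3,4,8)] A[OF assms(4,5,9)] A[OF assms(5,6,10)] A[OF assms(6,2,11)]
    by blast
qed

section \<open>Powers in groups\<close>

definition power_of :: "('a, 'b) monoid_scheme \<Rightarrow> 'a \<Rightarrow> 'a \<Rightarrow> bool" where
  "power_of G x y \<longleftrightarrow> (\<exists>n::nat. x = y [^]\<^bsub>G\<^esub> n)"

context group
begin

lemma power_of_refl: "x \<in> carrier G \<Longrightarrow> power_of G x x"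
  unfolding power_of_def by (metis nat_pow_eone)

lemma power_of_one [simp]: "power_of G \<one> x"
  unfolding power_of_def by (metis nat_pow_0)

lemma power_of_pow_self: "power_of G (x [^] (n::nat)) x"
  unfolding power_of_def by blast

lemma power_of_closed: "power_of G x y \<Longrightarrow> y \<in> carrier G \<Longrightarrow> x \<in> carrier G"
  unfolding power_of_def by auto

lemma power_of_trans: "power_of G x y \<Longrightarrow> power_of G y z \<Longrightarrow> z \<in> carrier G \<Longrightarrow> power_of G x z"
  unfolding power_of_def by (metis nat_pow_pow)

lemma power_of_mult:
  "power_of G u w \<Longrightarrow> power_of G v w \<Longrightarrow> w \<in> carrier G \<Longrightarrow> power_of G (u \<otimes> v) w"
  unfolding power_of_def by (metis nat_pow_mult)

lemma pow_eq_one_if_power_of: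
  "power_of G x y \<Longrightarrow> y \<in> carrier G \<Longrightarrow> y [^] (m::nat) = \<one> \<Longrightarrow> x [^] m = \<one>"
  unfolding power_of_def by (metis mult.commute nat_pow_one nat_pow_pow)

lemma ord_dvd_if_power_of:
  assumes "power_of G x y" "y \<in> carrier G"
  shows "ord x dvd ord y"
proof -
  have "x [^] ord y = \<one>" using assms pow_eq_one_if_power_of by simp
  then show ?thesis using assms power_of_closed pow_eq_id by blast
qed

lemma eq_one_if_coprime_exponents:
  assumes "x \<in> carrier G" "x [^] (m::nat) = \<one>" "x [^] (n::nat) = \<one>" "coprime m n"
  shows "x = \<one>"
proof -
  have "ord x dvd m" "ord x dvd n" using assms pow_eq_id by auto
  then have "ord x = 1" using \<open>coprime m n\<close> coprime_common_divisor_nat by blast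
  then show ?thesis using assms(1) ord_eq_1 by blast
qed

lemma eq_one_if_power_of_coprime:
  assumes "power_of G u w" "w \<in> carrier G" "w [^] (n::nat) = \<one>" "u [^] (m::nat) = \<one>" "coprime m n"
  shows "u = \<one>"
  using assms pow_eq_one_if_power_of power_of_closed eq_one_if_coprime_exponents by blast

lemma pow_eq_pow_if_mod_eq:
  assumes x: "x \<in> carrier G" and "x [^] (N::nat) = \<one>" and "m mod N = n mod N"
  shows "x [^] m = x [^] n"
proof -
  have reduce: "x [^] k = x [^] (k mod N)" for k :: nat
  proof -
    have "x [^] k = (x [^] N) [^] (k div N) \<otimes> x [^] (k mod N)"
      using x by (simp add: nat_pow_pow nat_pow_mult)
    then show ?thesis using x \<open>x [^] N = \<one>\<close> by simp
  qed
  show ?thesis using reduce[of m] reduce[of n] \<open>m mod N = n mod N\<close> by simp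
qed

lemma power_of_pow_coprime:
  assumes x: "x \<in> carrier G" and "x [^] (N::nat) = \<one>" and "coprime k N"
  shows "power_of G x (x [^] k)"
proof -
  obtain s where "k * s mod N = 1 mod N" using mod_inverse_nat[OF \<open>coprime k N\<close>] .
  then have "x [^] (k * s) = x [^] (1::nat)" using pow_eq_pow_if_mod_eq[OF x \<open>x [^] N = \<one>\<close>] by blast
  then have "x = (x [^] k) [^] s" using x by (simp add: nat_pow_pow)
  then show ?thesis unfolding power_of_def by blast
qed

lemma power_of_mult_left:
  assumes x: "x \<in> carrier G" and y: "y \<in> carrier G" and xy: "x \<otimes> y = y \<otimes> x"
    and "x [^] (m::nat) = \<one>" and "y [^] (n::nat) = \<one>" and "coprime m n"
  shows "power_of G x (x \<otimes> y)"
proof -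
  obtain s where s: "n * s mod m = 1 mod m"
    using mod_inverse_nat \<open>coprime m n\<close> by (metis coprime_commute)
  have "(x \<otimes> y) [^] (n * s) = x [^] (n * s) \<otimes> (y [^] n) [^] s"
    using pow_mult_distrib[OF xy x y] y by (simp add: nat_pow_pow)
  also have "\<dots> = x"
    using pow_eq_pow_if_mod_eq[OF x \<open>x [^] m = \<one>\<close> s] x \<open>y [^] n = \<one>\<close> by simp
  finally show ?thesis unfolding power_of_def by (intro exI[of _ "n * s"]) simp
qed

lemma power_of_mult_right:
  assumes "x \<in> carrier G" "y \<in> carrier G" "x \<otimes> y = y \<otimes> x"
    and "x [^] (m::nat) = \<one>" "y [^] (n::nat) = \<one>" "coprime m n"
  shows "power_of G y (x \<otimes> y)"
  using power_of_mult_left[of y x n m] assms by (simp add: coprime_commute)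

lemma power_of_mult_cancel:
  assumes y: "y \<in> carrier G" and z: "z \<in> carrier G" and yz: "y \<otimes> z = z \<otimes> y"
    and "x [^] (m::nat) = \<one>" and "z [^] (n::nat) = \<one>" and "coprime m n"
    and "power_of G x (y \<otimes> z)"
  shows "power_of G x y"
proof -
  obtain k :: nat where k: "x = (y \<otimes> z) [^] k"
    using \<open>power_of G x (y \<otimes> z)\<close> unfolding power_of_def by blast
  have x: "x \<in> carrier G" using k y z by simp
  obtain s where s: "n * s mod m = 1 mod m"
    using mod_inverse_nat \<open>coprime m n\<close> by (metis coprime_commute)
  have "x = x [^] (n * s)"
    using pow_eq_pow_if_mod_eq[OF x \<open>x [^] m = \<one>\<close> s] x by simp
  also have "\<dots> = ((y \<otimes> z) [^] (n * s)) [^] k"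
    using k y z by (simp add: nat_pow_pow mult.commute)
  also have "(y \<otimes> z) [^] (n * s) = y [^] (n * s) \<otimes> (z [^] n) [^] s"
    using pow_mult_distrib[OF yz y z] z by (simp add: nat_pow_pow)
  also have "\<dots> = y [^] (n * s)" using y \<open>z [^] n = \<one>\<close> by simp
  finally show ?thesis using power_of_pow_self y by (metis nat_pow_pow power_of_def)
qed

lemma power_of_prime_exponent:
  assumes a: "a \<in> carrier G" and p: "Factorial_Ring.prime (p::nat)" and "a [^] p = \<one>"
    and "power_of G x a" and "x \<noteq> \<one>"
  shows "power_of G a x"
proof -
  obtain k :: nat where k: "x = a [^] k" using \<open>power_of G x a\<close> unfolding power_of_def by blast
  have "\<not> p dvd k"
  proof
    assume "p dvd k"
    then obtain t where "k = p * t" ..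
    then have "x = (a [^] p) [^] t" using k a by (simp add: nat_pow_pow)
    with \<open>a [^] p = \<one>\<close> \<open>x \<noteq> \<one>\<close> show False by simp
  qed
  then have "coprime k p" using prime_imp_coprime[OF p] coprime_commute by blast
  then show ?thesis using power_of_pow_coprime[OF a \<open>a [^] p = \<one>\<close>] k by simp
qed

lemma exists_pow_of_prime_exponent:
  assumes x: "x \<in> carrier G" and "x [^] ((p::nat) ^ i) = \<one>" and "x \<noteq> \<one>"
  shows "\<exists>j. x [^] (p ^ j) \<noteq> \<one> \<and> (x [^] (p ^ j)) [^] p = \<one>"
  using assms(2)
proof (induction i)
  case 0
  with \<open>x \<noteq> \<one>\<close> x show ?case by simp
next
  case (Suc i)
  show ?case
  proof (cases "x [^] (p ^ i) = \<one>")
    case True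
    then show ?thesis using Suc.IH by blast
  next
    case False
    moreover have "(x [^] (p ^ i)) [^] p = \<one>"
      using Suc.prems x by (simp add: nat_pow_pow mult.commute)
    ultimately show ?thesis by blast
  qed
qed

lemma ord_mult_coprime:
  assumes x: "x \<in> carrier G" and y: "y \<in> carrier G" and xy: "x \<otimes> y = y \<otimes> x"
    and coprime: "coprime (ord x) (ord y)"
  shows "ord (x \<otimes> y) = ord x * ord y"
proof -
  have "(x \<otimes> y) [^] k = \<one> \<longleftrightarrow> ord x * ord y dvd k" for k :: nat
  proof
    assume "(x \<otimes> y) [^] k = \<one>"
    then have "x [^] k = \<one>" "y [^] k = \<one>"
      using pow_eq_one_if_power_of[OF power_of_mult_left[OF x y xy pow_ord_eq_1[OF x] pow_ord_eq_1[OF y] coprime]]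
        pow_eq_one_if_power_of[OF power_of_mult_right[OF x y xy pow_ord_eq_1[OF x] pow_ord_eq_1[OF y] coprime]]
        x y by simp_all
    then have "ord x dvd k" "ord y dvd k" using x y pow_eq_id by blast+
    then show "ord x * ord y dvd k" using divides_mult coprime by blast
  next
    assume "ord x * ord y dvd k"
    then have "ord x dvd k" "ord y dvd k" using dvd_mult_left dvd_mult_right by blast+
    then have "x [^] k = \<one>" "y [^] k = \<one>" using x y pow_eq_id by blast+
    then show "(x \<otimes> y) [^] k = \<one>" using pow_mult_distrib[OF xy x y] by simp
  qed
  then show ?thesis using ord_unique[of "x \<otimes> y"] x y by simp
qed

lemma ord_mult_prime_powers:
  assumes p: "Factorial_Ring.prime p" and q: "Factorial_Ring.prime q" and "p \<noteq> q"
    and x: "x \<in> carrier G" and y: "y \<in> carrier G" and xy: "x \<otimes> y = y \<otimes> x"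
    and "ord x = p ^ i" and "ord y = q ^ j"
  shows "ord (x \<otimes> y) = p ^ i * q ^ j" and "power_of G x (x \<otimes> y)" and "power_of G y (x \<otimes> y)"
proof -
  have coprime: "coprime (ord x) (ord y)"
    using primes_coprime[OF p q \<open>p \<noteq> q\<close>] \<open>ord x = p ^ i\<close> \<open>ord y = q ^ j\<close> by simp
  show "ord (x \<otimes> y) = p ^ i * q ^ j"
    using ord_mult_coprime[OF x y xy coprime] \<open>ord x = p ^ i\<close> \<open>ord y = q ^ j\<close> by simp
  show "power_of G x (x \<otimes> y)" "power_of G y (x \<otimes> y)"
    using power_of_mult_left[OF x y xy _ _ coprime] power_of_mult_right[OF x y xy _ _ coprime] x y by simp_all
qed

lemma pow_mult_eq_one:
  assumes "x \<in> carrier G" "y \<in> carrier G" "x \<otimes> y = y \<otimes> x" "x [^] (m::nat) = \<one>" "y [^] (n::nat) = \<one>"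
  shows "(x \<otimes> y) [^] (m * n) = \<one>"
proof -
  have "(x \<otimes> y) [^] (m * n) = (x [^] m) [^] n \<otimes> (y [^] n) [^] m"
    using pow_mult_distrib assms(1-3) by (simp add: nat_pow_pow mult.commute)
  then show ?thesis using assms(4,5) by simp
qed

lemma inv_mult_cancel_left: "x \<in> carrier G \<Longrightarrow> y \<in> carrier G \<Longrightarrow> inv x \<otimes> (x \<otimes> y) = y"
  by (simp add: m_assoc[symmetric])

lemma conj_pow:
  assumes g: "g \<in> carrier G" and x: "x \<in> carrier G"
  shows "(g \<otimes> x \<otimes> inv g) [^] (n::nat) = g \<otimes> x [^] n \<otimes> inv g"
proof (induction n)
  case 0
  then show ?case using g by simp
next
  case (Suc n)
  then show ?case using g x by (simp add: m_assoc inv_mult_cancel_left)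
qed

lemma commute_pows:
  assumes "x \<in> carrier G" "y \<in> carrier G" "x \<otimes> y = y \<otimes> x"
  shows "x [^] (m::nat) \<otimes> y [^] (n::nat) = y [^] n \<otimes> x [^] m"
  using assms group_commutes_pow by (metis nat_pow_closed)

end

section \<open>Central elements of prime order\<close>

lemma (in group) subgroup_group_center: "subgroup (group_center G) G"
proof (rule subgroupI)
  show "group_center G \<subseteq> carrier G" "group_center G \<noteq> {}"
    unfolding group_center_def by auto
next
  fix x assume "x \<in> group_center G"
  then have x: "x \<in> carrier G" and comm: "\<And>g. g \<in> carrier G \<Longrightarrow> x \<otimes> g = g \<otimes> x"
    unfolding group_center_def by auto
  have "inv x \<otimes> g = g \<otimes> inv x" if g: "g \<in> carrier G" for g
  proof -
    have "inv x \<otimes> (x \<otimes> g) \<otimes> inv x = inv x \<otimes> (g \<otimes> x) \<otimes> inv x" using comm[OF g] by simp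
    then show ?thesis using x g by (simp add: m_assoc inv_mult_cancel_left)
  qed
  with x show "inv x \<in> group_center G" unfolding group_center_def by blast
next
  fix x y assume "x \<in> group_center G" "y \<in> group_center G"
  then have x: "x \<in> carrier G" and y: "y \<in> carrier G"
    and comm: "\<And>g. g \<in> carrier G \<Longrightarrow> x \<otimes> g = g \<otimes> x \<and> y \<otimes> g = g \<otimes> y"
    unfolding group_center_def by auto
  have "x \<otimes> y \<otimes> g = g \<otimes> (x \<otimes> y)" if g: "g \<in> carrier G" for g
    using comm[OF g] x y g by (metis m_assoc)
  with x y show "x \<otimes> y \<in> group_center G" unfolding group_center_def by blast
qed

lemma (in group) exists_elem_of_prime_exponent:
  assumes "finite (carrier G)" and r: "Factorial_Ring.prime (r::nat)" and "r dvd order G"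
  obtains x where "x \<in> carrier G" "x \<noteq> \<one>" "x [^] r = \<one>"
proof -
  have "order G = r ^ 1 * (order G div r)" using \<open>r dvd order G\<close> by simp
  from sylow_thm[OF r is_group this \<open>finite (carrier G)\<close>]
  obtain H where H: "subgroup H G" "card H = r" by auto
  have "\<not> H \<subseteq> {\<one>}"
  proof
    assume "H \<subseteq> {\<one>}"
    then have "card H \<le> 1" using card_mono[of "{\<one>}" H] by simp
    with H(2) prime_gt_1_nat[OF r] show False by simp
  qed
  then obtain x where x: "x \<in> H" "x \<noteq> \<one>" by blast
  have "group (G\<lparr>carrier := H\<rparr>)" using subgroup_imp_group[OF H(1)] .
  then have "x [^]\<^bsub>G\<lparr>carrier := H\<rparr>\<^esub> order (G\<lparr>carrier := H\<rparr>) = \<one>\<^bsub>G\<lparr>carrier := H\<rparr>\<^esub>"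
    using group.pow_order_eq_1 x(1) by fastforce
  then have "x [^] r = \<one>" using H(2) by (simp add: order_def nat_pow_consistent[symmetric])
  with x H(1) show ?thesis using that subgroup.subset by blast
qed

lemma (in group) exists_central_elem_of_prime_exponent:
  assumes "finite (carrier G)" and r: "Factorial_Ring.prime (r::nat)" and "r dvd card (group_center G)"
  obtains z where "z \<in> group_center G" "z \<noteq> \<one>" "z [^] r = \<one>"
proof -
  let ?Z = "G\<lparr>carrier := group_center G\<rparr>"
  have Z: "group ?Z" using subgroup_imp_group[OF subgroup_group_center] .
  have "finite (group_center G)"
    using assms(1) subgroup.subset[OF subgroup_group_center] finite_subset by blast
  then obtain z where "z \<in> group_center G" "z \<noteq> \<one>" "z [^]\<^bsub>?Z\<^esub> r = \<one>"
    using group.exists_elem_of_prime_exponent[OF Z _ r] assms(3) by (auto simp: order_def)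
  then show ?thesis using that by (simp add: nat_pow_consistent[symmetric])
qed

section \<open>The difference graph of a finite group\<close>

lemma diff_edge_sym: "diff_edge G x y \<Longrightarrow> diff_edge G y x"
  unfolding diff_edge_def ipg_edge_def pg_edge_def by auto

lemma diff_edge_imp_diff_vertices:
  assumes "diff_edge G x y"
  shows "x \<in> diff_vertices G \<and> y \<in> diff_vertices G"
proof -
  have "x \<in> carrier G" "y \<in> carrier G" using assms unfolding diff_edge_def ipg_edge_def by auto
  then show ?thesis using assms diff_edge_sym[OF assms] unfolding diff_vertices_def by blast
qed

locale finite_group = group +
  assumes finite_carrier: "finite (carrier G)"
begin

lemma power_of_inv:
  assumes "power_of G u w" "w \<in> carrier G"
  shows "power_of G (inv u) w"
proof -
  have u: "u \<in> carrier G" using assms power_of_closed by blast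
  have "order G > 0" using finite_carrier order_gt_0_iff_finite by blast
  then have "u [^] (order G - 1) \<otimes> u = \<one>"
    using u pow_order_eq_1 by (metis Suc_diff_1 nat_pow_Suc)
  then have "inv u = u [^] (order G - 1)" using u by (simp add: inv_equality)
  then show ?thesis using power_of_trans[OF power_of_pow_self assms] by simp
qed

lemma generate_singleton_eq_powers: "x \<in> carrier G \<Longrightarrow> generate G {x} = {z. power_of G z x}"
  using generate_pow_on_finite_carrier[OF finite_carrier] unfolding power_of_def by auto

lemma diff_edge_iff:
  "diff_edge G x y \<longleftrightarrow> x \<in> carrier G \<and> y \<in> carrier G \<and> \<not> power_of G x y \<and> \<not> power_of G y x \<and>
     (\<exists>z. z \<noteq> \<one> \<and> power_of G z x \<and> power_of G z y)"
proof
  assume edge: "diff_edge G x y"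
  then have x: "x \<in> carrier G" and y: "y \<in> carrier G" unfolding diff_edge_def ipg_edge_def by auto
  have not_powers: "\<not> power_of G x y" "\<not> power_of G y x"
    using edge unfolding diff_edge_def pg_edge_def ipg_edge_def power_of_def by auto
  then have "x \<noteq> \<one>" "y \<noteq> \<one>" by auto
  with edge have "generate G {x} \<inter> generate G {y} \<noteq> {\<one>}" unfolding diff_edge_def ipg_edge_def by auto
  moreover have "\<one> \<in> generate G {x} \<inter> generate G {y}" using x y by (simp add: generate_singleton_eq_powers)
  ultimately obtain z where "z \<in> generate G {x} \<inter> generate G {y}" "z \<noteq> \<one>" by blast
  then show "x \<in> carrier G \<and> y \<in> carrier G \<and> \<not> power_of G x y \<and> \<not> power_of G y x \<and>
     (\<exists>z. z \<noteq> \<one> \<and> power_of G z x \<and> power_of G z y)"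
    using x y not_powers by (auto simp: generate_singleton_eq_powers)
next
  assume "x \<in> carrier G \<and> y \<in> carrier G \<and> \<not> power_of G x y \<and> \<not> power_of G y x \<and>
     (\<exists>z. z \<noteq> \<one> \<and> power_of G z x \<and> power_of G z y)"
  then obtain z where x: "x \<in> carrier G" and y: "y \<in> carrier G"
    and not_powers: "\<not> power_of G x y" "\<not> power_of G y x"
    and z: "z \<noteq> \<one>" "power_of G z x" "power_of G z y" by blast
  have "x \<noteq> y" using not_powers power_of_refl x by auto
  moreover have "z \<in> generate G {x} \<inter> generate G {y}" using z x y by (simp add: generate_singleton_eq_powers)
  with z(1) have "generate G {x} \<inter> generate G {y} \<noteq> {\<one>}" by blast
  ultimately show "diff_edge G x y"
    using x y not_powers unfolding diff_edge_def ipg_edge_def pg_edge_def power_of_def by auto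
qed

lemma diff_edge_mult_coprime:
  assumes w1: "w1 \<in> carrier G" and w2: "w2 \<in> carrier G" and c: "c \<in> carrier G"
    and c1: "w1 \<otimes> c = c \<otimes> w1" and c2: "w2 \<otimes> c = c \<otimes> w2"
    and e1: "w1 [^] (m::nat) = \<one>" and e2: "w2 [^] m = \<one>" and ec: "c [^] (n::nat) = \<one>"
    and coprime: "coprime m n" and "c \<noteq> \<one>"
    and "\<not> power_of G w1 w2" and "\<not> power_of G w2 w1"
  shows "diff_edge G (w1 \<otimes> c) (w2 \<otimes> c)"
proof -
  have w1c: "power_of G w1 (w1 \<otimes> c)" using power_of_mult_left[OF w1 c c1 e1 ec coprime] .
  have w2c: "power_of G w2 (w2 \<otimes> c)" using power_of_mult_left[OF w2 c c2 e2 ec coprime] .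
  have "\<not> power_of G (w1 \<otimes> c) (w2 \<otimes> c)"
  proof
    assume "power_of G (w1 \<otimes> c) (w2 \<otimes> c)"
    then have "power_of G w1 (w2 \<otimes> c)" using power_of_trans[OF w1c] w2 c by simp
    then have "power_of G w1 w2" using power_of_mult_cancel[OF w2 c c2 e1 ec coprime] by blast
    with \<open>\<not> power_of G w1 w2\<close> show False ..
  qed
  moreover have "\<not> power_of G (w2 \<otimes> c) (w1 \<otimes> c)"
  proof
    assume "power_of G (w2 \<otimes> c) (w1 \<otimes> c)"
    then have "power_of G w2 (w1 \<otimes> c)" using power_of_trans[OF w2c] w1 c by simp
    then have "power_of G w2 w1" using power_of_mult_cancel[OF w1 c c1 e2 ec coprime] by blast
    with \<open>\<not> power_of G w2 w1\<close> show False ..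
  qed
  moreover have "power_of G c (w1 \<otimes> c)" "power_of G c (w2 \<otimes> c)"
    using power_of_mult_right[OF w1 c c1 e1 ec coprime] power_of_mult_right[OF w2 c c2 e2 ec coprime] .
  ultimately show ?thesis unfolding diff_edge_iff using w1 w2 c \<open>c \<noteq> \<one>\<close> by blast
qed

lemma diff_edge_if_ord_exponents_incomparable:
  assumes p: "Factorial_Ring.prime p" and q: "Factorial_Ring.prime q" and "p \<noteq> q"
    and "v \<in> carrier G" "w \<in> carrier G" "z \<noteq> \<one>" "power_of G z v" "power_of G z w"
    and "ord v = p ^ i * q ^ j" "ord w = p ^ k * q ^ l" "k < i \<or> l < j" "i < k \<or> j < l"
  shows "diff_edge G v w"
proof -
  have "\<not> ord v dvd ord w" "\<not> ord w dvd ord v"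
    using prime_powers_dvd_iff[OF p q \<open>p \<noteq> q\<close>] assms(9-12) by auto
  then show ?thesis using assms(4-8) ord_dvd_if_power_of unfolding diff_edge_iff by blast
qed

lemma commute_if_conjugates_power_of:
  assumes u: "u \<in> carrier G" and v: "v \<in> carrier G"
    and "u [^] (m::nat) = \<one>" and "v [^] (n::nat) = \<one>" and "coprime m n"
    and conj_u: "power_of G (v \<otimes> u \<otimes> inv v) u" and conj_v: "power_of G (u \<otimes> v \<otimes> inv u) v"
  shows "u \<otimes> v = v \<otimes> u"
proof -
  define c where "c = u \<otimes> v \<otimes> inv u \<otimes> inv v"
  have "c = u \<otimes> inv (v \<otimes> u \<otimes> inv v)" using u v by (simp add: c_def inv_mult_group m_assoc)
  then have "power_of G c u" using power_of_mult[OF power_of_refl[OF u] power_of_inv[OF conj_u u] u] by simp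
  moreover have "power_of G c v"
    unfolding c_def using power_of_mult[OF conj_v power_of_inv[OF power_of_refl[OF v] v] v] .
  ultimately have "c = \<one>"
    using eq_one_if_coprime_exponents pow_eq_one_if_power_of assms(3-5) u v
    by (metis power_of_closed)
  moreover have "u \<otimes> v = c \<otimes> (v \<otimes> u)" using u v by (simp add: c_def m_assoc inv_mult_cancel_left)
  ultimately show ?thesis using u v by simp
qed

lemma power_of_mult_if_coprime_parts:
  assumes order: "order G = M * N" and "coprime M N"
    and u: "u \<in> carrier G" and v: "v \<in> carrier G" and uv: "u \<otimes> v = v \<otimes> u"
    and eu: "u [^] (m::nat) = \<one>" and ev: "v [^] (n::nat) = \<one>" and "coprime m n"
    and M_part: "\<And>x. x \<in> carrier G \<Longrightarrow> x [^] M = \<one> \<Longrightarrow> power_of G x u"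
    and N_part: "\<And>x. x \<in> carrier G \<Longrightarrow> x [^] N = \<one> \<Longrightarrow> power_of G x v"
    and g: "g \<in> carrier G"
  shows "power_of G g (u \<otimes> v)"
proof -
  have g_order: "g [^] (M * N) = \<one>" using pow_order_eq_1[OF g] order by simp
  have "power_of G (g [^] N) u" using M_part g g_order by (simp add: nat_pow_pow mult.commute)
  then have gN: "power_of G (g [^] N) (u \<otimes> v)"
    using power_of_trans power_of_mult_left[OF u v uv eu ev \<open>coprime m n\<close>] u v by blast
  have "power_of G (g [^] M) v" using N_part g g_order by (simp add: nat_pow_pow)
  then have gM: "power_of G (g [^] M) (u \<otimes> v)"
    using power_of_trans power_of_mult_right[OF u v uv eu ev \<open>coprime m n\<close>] u v by blast
  have "power_of G (g [^] (M + N)) (u \<otimes> v)"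
    using power_of_mult[OF gM gN] u v g by (simp add: nat_pow_mult)
  moreover have "power_of G g (g [^] (M + N))"
    using power_of_pow_coprime[OF g g_order coprime_add_mult[OF \<open>coprime M N\<close>]] .
  ultimately show ?thesis using power_of_trans u v by blast
qed

lemma iso_integer_mod_group_if_generator:
  assumes w: "w \<in> carrier G" and generator: "\<And>x. x \<in> carrier G \<Longrightarrow> power_of G x w"
  shows "G \<cong> integer_mod_group (ord w)"
proof -
  define N where "N = ord w"
  have "N > 0" using ord_ge_1[OF finite_carrier w] by (simp add: N_def)
  then have carrier_Z: "carrier (integer_mod_group N) = {0..<int N}"
    by (simp add: carrier_integer_mod_group)
  have pow_mod: "w [^] (i mod int N) = w [^] i" for i :: int
    using int_pow_eq[OF w] by (simp add: N_def minus_mod_eq_mult_div)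
  define f where "f = (\<lambda>i::int. w [^] i)"
  have "f \<in> hom (integer_mod_group N) G"
    by (rule homI) (simp_all add: f_def pow_mod int_pow_mult w)
  moreover have "inj_on f (carrier (integer_mod_group N))"
  proof (rule inj_onI)
    fix i j assume ij: "i \<in> carrier (integer_mod_group N)" "j \<in> carrier (integer_mod_group N)"
      and "f i = f j"
    then have "i mod int N = j mod int N"
      using int_pow_eq[OF w] by (simp add: f_def N_def mod_eq_dvd_iff dvd_diff_commute)
    then show "i = j" using ij carrier_Z by simp
  qed
  moreover have "f ` carrier (integer_mod_group N) = carrier G"
  proof
    show "f ` carrier (integer_mod_group N) \<subseteq> carrier G" using w by (auto simp: f_def)
    show "carrier G \<subseteq> f ` carrier (integer_mod_group N)"
    proof
      fix x assume "x \<in> carrier G"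
      then obtain k :: nat where "x = w [^] k" using generator unfolding power_of_def by blast
      then have "x = f (int k mod int N)" by (simp add: f_def pow_mod int_pow_int)
      moreover have "int k mod int N \<in> carrier (integer_mod_group N)" using carrier_Z \<open>N > 0\<close> by simp
      ultimately show "x \<in> f ` carrier (integer_mod_group N)" by blast
    qed
  qed
  ultimately have "f \<in> iso (integer_mod_group N) G" unfolding iso_def bij_betw_def by simp
  then have "integer_mod_group N \<cong> G" unfolding is_iso_def by blast
  then show ?thesis using group.iso_sym[OF group_integer_mod_group] by (simp add: N_def)
qed

end

lemma power_of_integer_mod_group:
  assumes "n > 0" and x: "x \<in> carrier (integer_mod_group n)" and "gcd y (int n) dvd x"
  shows "power_of (integer_mod_group n) x y"
proof -
  obtain u v where uv: "u * y + v * int n = gcd y (int n)" using bezout_int by blast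
  obtain t where t: "x = gcd y (int n) * t" using \<open>gcd y (int n) dvd x\<close> by blast
  define k where "k = nat ((t * u) mod int n)"
  have "int k = (t * u) mod int n" using \<open>n > 0\<close> by (simp add: k_def)
  then have "y [^]\<^bsub>integer_mod_group n\<^esub> k = (t * u * y) mod int n" by (simp add: mod_mult_left_eq)
  also have "t * u * y = x + (- (t * v)) * int n" by (simp add: t uv[symmetric] algebra_simps)
  also have "(x + (- (t * v)) * int n) mod int n = x mod int n" by (rule mod_mult_self1)
  also have "\<dots> = x" using x \<open>n > 0\<close> by (simp add: carrier_integer_mod_group)
  finally show ?thesis unfolding power_of_def by (intro exI[of _ k]) simp
qed

lemma (in group) power_of_if_iso_power_of:
  assumes \<phi>: "\<phi> \<in> iso G H" and "group H" and x: "x \<in> carrier G" and y: "y \<in> carrier G"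
    and "power_of H (\<phi> x) (\<phi> y)"
  shows "power_of G x y"
proof -
  obtain k :: nat where "\<phi> x = \<phi> y [^]\<^bsub>H\<^esub> k" using assms(5) unfolding power_of_def by blast
  also have "\<dots> = \<phi> (y [^] k)"
    using hom_nat_pow[of \<phi> G H y k] \<phi> y \<open>group H\<close> is_group by (simp add: iso_def)
  finally have "x = y [^] k"
    using \<phi> x y unfolding iso_def bij_betw_def inj_on_def by (simp add: nat_pow_closed)
  then show ?thesis unfolding power_of_def by blast
qed

context finite_group
begin

lemma bipartite_diff_graph_if_iso_prime_power_mult_prime:
  assumes p: "Factorial_Ring.prime p" and q: "Factorial_Ring.prime q"
    and \<phi>: "\<phi> \<in> iso G (integer_mod_group (p ^ \<alpha> * q))"
  shows "bipartite (diff_vertices G) (diff_edge G)"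
proof -
  define n where "n = p ^ \<alpha> * q"
  have "n > 0" using p q by (simp add: n_def prime_gt_0_nat)
  have \<phi>_carrier: "\<phi> x \<in> carrier (integer_mod_group n)" if "x \<in> carrier G" for x
    using \<phi> that by (auto simp: iso_def hom_def n_def)
  have comparable: "power_of G x y \<or> power_of G y x"
    if x: "x \<in> carrier G" and y: "y \<in> carrier G" and same: "int q dvd \<phi> x \<longleftrightarrow> int q dvd \<phi> y" for x y
  proof -
    obtain k l :: nat where k: "\<phi> x = int k" and l: "\<phi> y = int l"
      using \<phi>_carrier[OF x] \<phi>_carrier[OF y] \<open>n > 0\<close>
      by (metis atLeastLessThan_iff carrier_integer_mod_group nonneg_int_cases not_gr0)
    have "q dvd k \<longleftrightarrow> q dvd l" using same k l by simp
    then have "gcd k n dvd l \<or> gcd l n dvd k"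
      using gcd_comparable_prime_power_mult_prime[OF p q n_def] by blast
    then have "gcd (\<phi> x) (int n) dvd \<phi> y \<or> gcd (\<phi> y) (int n) dvd \<phi> x" using k l by simp
    then show ?thesis
      using power_of_integer_mod_group[OF \<open>n > 0\<close>] \<phi>_carrier x y
        power_of_if_iso_power_of[OF \<phi>[folded n_def] group_integer_mod_group] by blast
  qed
  show ?thesis
  proof (rule bipartiteI[where A = "{x. int q dvd \<phi> x}"])
    fix x y assume "diff_edge G x y"
    then show "x \<in> {x. int q dvd \<phi> x} \<longleftrightarrow> y \<notin> {x. int q dvd \<phi> x}"
      using comparable unfolding diff_edge_iff by blast
  qed
qed

end

section \<open>Bipartite difference graphs\<close>

locale bipartite_diff_graph = finite_group +
  assumes bipartite: "bipartite (diff_vertices G) (diff_edge G)"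
begin

lemma no_triangle: "diff_edge G x y \<Longrightarrow> diff_edge G y z \<Longrightarrow> diff_edge G z x \<Longrightarrow> False"
  using bipartite_no_triangle[OF bipartite] diff_edge_imp_diff_vertices by meson

lemma no_pentagon:
  "diff_edge G x1 x2 \<Longrightarrow> diff_edge G x2 x3 \<Longrightarrow> diff_edge G x3 x4 \<Longrightarrow> diff_edge G x4 x5 \<Longrightarrow>
    diff_edge G x5 x1 \<Longrightarrow> False"
  using bipartite_no_pentagon[OF bipartite] diff_edge_imp_diff_vertices by meson

lemma no_commuting_elements_of_square_prime_orders:
  assumes p: "Factorial_Ring.prime p" and q: "Factorial_Ring.prime q" and "p \<noteq> q"
    and x: "x \<in> carrier G" and y: "y \<in> carrier G" and xy: "x \<otimes> y = y \<otimes> x"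
    and "ord x = p ^ 2" and "ord y = q ^ 2"
  shows False
proof -
  define x1 where "x1 = x [^] p"
  define y1 where "y1 = y [^] q"
  have x1: "x1 \<in> carrier G" and y1: "y1 \<in> carrier G" using x y by (simp_all add: x1_def y1_def)
  have "ord x1 = p ^ 1"
    unfolding x1_def using ord_pow[OF x, of p] \<open>ord x = p ^ 2\<close> prime_gt_0_nat[OF p]
    by (simp add: power2_eq_square)
  have "ord y1 = q ^ 1"
    unfolding y1_def using ord_pow[OF y, of q] \<open>ord y = q ^ 2\<close> prime_gt_0_nat[OF q]
    by (simp add: power2_eq_square)
  have x1_nontrivial: "x1 \<noteq> \<one>" using \<open>ord x1 = p ^ 1\<close> p by (metis ord_id power_one_right not_prime_1)
  have y1_nontrivial: "y1 \<noteq> \<one>" using \<open>ord y1 = q ^ 1\<close> q by (metis ord_id power_one_right not_prime_1)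
  have "x1 \<otimes> y = y \<otimes> x1" "x \<otimes> y1 = y1 \<otimes> x" "x1 \<otimes> y1 = y1 \<otimes> x1"
    using commute_pows[OF x y xy, of p 1] commute_pows[OF x y xy, of 1 q] commute_pows[OF x y xy, of p q] x y
    by (simp_all add: x1_def y1_def)
  note products =
    ord_mult_prime_powers[OF p q \<open>p \<noteq> q\<close> x1 y \<open>x1 \<otimes> y = y \<otimes> x1\<close> \<open>ord x1 = p ^ 1\<close> \<open>ord y = q ^ 2\<close>]
    ord_mult_prime_powers[OF p q \<open>p \<noteq> q\<close> x y1 \<open>x \<otimes> y1 = y1 \<otimes> x\<close> \<open>ord x = p ^ 2\<close> \<open>ord y1 = q ^ 1\<close>]
    ord_mult_prime_powers[OF p q \<open>p \<noteq> q\<close> x1 y1 \<open>x1 \<otimes> y1 = y1 \<otimes> x1\<close> \<open>ord x1 = p ^ 1\<close> \<open>ord y1 = q ^ 1\<close>]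
  have ox: "ord x = p ^ 2 * q ^ 0" and oy: "ord y = p ^ 0 * q ^ 2"
    using \<open>ord x = p ^ 2\<close> \<open>ord y = q ^ 2\<close> by simp_all
  have x1x: "power_of G x1 x" and y1y: "power_of G y1 y" unfolding x1_def y1_def by (rule power_of_pow_self)+
  have x1xy1: "power_of G x1 (x \<otimes> y1)" using power_of_trans[OF x1x products(5)] x y1 by simp
  note edge = diff_edge_if_ord_exponents_incomparable[OF p q \<open>p \<noteq> q\<close>]
  show False
  proof (rule no_pentagon)
    show "diff_edge G x (x1 \<otimes> y)"
      by (rule edge[OF x _ x1_nontrivial x1x products(2) ox products(1)]) (simp_all add: x1 y)
    show "diff_edge G (x1 \<otimes> y) (x \<otimes> y1)"
      by (rule edge[OF _ _ x1_nontrivial products(2) x1xy1 products(1,4)]) (simp_all add: x y x1 y1)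
    show "diff_edge G (x \<otimes> y1) y"
      by (rule edge[OF _ y y1_nontrivial products(6) y1y products(4) oy]) (simp_all add: x y1)
    show "diff_edge G y (x1 \<otimes> y1)"
      by (rule edge[OF y _ y1_nontrivial y1y products(9) oy products(7)]) (simp_all add: x1 y1)
    show "diff_edge G (x1 \<otimes> y1) x"
      by (rule edge[OF _ x x1_nontrivial products(8) x1x products(7) ox]) (simp_all add: x1 y1)
  qed
qed

lemma prime_power_orders_le_one:
  assumes p: "Factorial_Ring.prime p" and q: "Factorial_Ring.prime q" and "p \<noteq> q"
    and u: "u \<in> carrier G" and v: "v \<in> carrier G" and uv: "u \<otimes> v = v \<otimes> u"
    and "ord u = p ^ m" and "ord v = q ^ n"
  shows "m \<le> 1 \<or> n \<le> 1"
proof (rule ccontr)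
  assume "\<not> (m \<le> 1 \<or> n \<le> 1)"
  then have "2 \<le> m" "2 \<le> n" by auto
  define x where "x = u [^] (p ^ (m - 2))"
  define y where "y = v [^] (q ^ (n - 2))"
  have x: "x \<in> carrier G" and y: "y \<in> carrier G" using u v by (simp_all add: x_def y_def)
  have "ord x = p ^ 2"
    unfolding x_def using ord_pow[OF u, of "p ^ (m - 2)"] \<open>ord u = p ^ m\<close> \<open>2 \<le> m\<close> prime_gt_0_nat[OF p]
    by (simp add: le_imp_power_dvd power_diff[symmetric])
  moreover have "ord y = q ^ 2"
    unfolding y_def using ord_pow[OF v, of "q ^ (n - 2)"] \<open>ord v = q ^ n\<close> \<open>2 \<le> n\<close> prime_gt_0_nat[OF q]
    by (simp add: le_imp_power_dvd power_diff[symmetric])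
  moreover have "x \<otimes> y = y \<otimes> x" unfolding x_def y_def using commute_pows[OF u v uv] .
  ultimately show False using no_commuting_elements_of_square_prime_orders[OF p q \<open>p \<noteq> q\<close> x y] by blast
qed

end

locale bipartite_diff_graph_central = bipartite_diff_graph +
  fixes p q :: nat and a b
  assumes p: "Factorial_Ring.prime p" and q: "Factorial_Ring.prime q" and p_neq_q: "p \<noteq> q"
    and a_central: "a \<in> group_center G" and a_nontrivial: "a \<noteq> \<one>" and a_pow: "a [^] p = \<one>"
    and b_central: "b \<in> group_center G" and b_nontrivial: "b \<noteq> \<one>" and b_pow: "b [^] q = \<one>"
begin

lemma swapped: "bipartite_diff_graph_central G q p b a"
  by unfold_locales (use p q p_neq_q a_central a_nontrivial a_pow b_central b_nontrivial b_pow in auto)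

lemma a: "a \<in> carrier G" and a_commute: "g \<in> carrier G \<Longrightarrow> a \<otimes> g = g \<otimes> a"
  using a_central unfolding group_center_def by auto

lemma b: "b \<in> carrier G" and b_commute: "g \<in> carrier G \<Longrightarrow> b \<otimes> g = g \<otimes> b"
  using b_central unfolding group_center_def by auto

lemma coprime_pq: "coprime p q"
  using primes_coprime[OF p q p_neq_q] .

text \<open>Otherwise \<open>a\<close>, \<open>y\<close> and \<open>a y\<close> generate three different subgroups of order \<open>p\<close>,
  and multiplying them by \<open>b\<close> gives a triangle.\<close>

lemma power_of_a_if_exponent_p:
  assumes y: "y \<in> carrier G" and y_pow: "y [^] p = \<one>" and "y \<noteq> \<one>"
  shows "power_of G y a"
proof (rule ccontr)
  assume y_a: "\<not> power_of G y a"
  define z where "z = a \<otimes> y"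
  have z: "z \<in> carrier G" using a y by (simp add: z_def)
  have z_pow: "z [^] p = \<one>"
    using pow_mult_distrib[OF a_commute[OF y] a y] a_pow y_pow by (simp add: z_def)
  have a_y: "\<not> power_of G a y" using power_of_prime_exponent[OF y p y_pow _ a_nontrivial] y_a by blast
  have z_a: "\<not> power_of G z a"
  proof
    assume "power_of G z a"
    then have "power_of G (inv a \<otimes> z) a"
      using power_of_mult[OF power_of_inv[OF power_of_refl[OF a] a] _ a] by blast
    with y_a show False using a y by (simp add: z_def inv_mult_cancel_left)
  qed
  have a_z: "\<not> power_of G a z" using power_of_prime_exponent[OF z p z_pow _ a_nontrivial] z_a by blast
  have y_z: "\<not> power_of G y z"
  proof
    assume "power_of G y z"
    then have "power_of G (z \<otimes> inv y) z" using power_of_mult[OF power_of_refl[OF z] power_of_inv[OF _ z] z] by blast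
    with a_z show False using a y by (simp add: z_def m_assoc)
  qed
  have z_y: "\<not> power_of G z y"
  proof
    assume "power_of G z y"
    then have "power_of G (z \<otimes> inv y) y" using power_of_mult[OF _ power_of_inv[OF power_of_refl[OF y] y] y] by blast
    with a_y show False using a y by (simp add: z_def m_assoc)
  qed
  have edge: "diff_edge G (w1 \<otimes> b) (w2 \<otimes> b)"
    if "w1 \<in> carrier G" "w2 \<in> carrier G" "w1 [^] p = \<one>" "w2 [^] p = \<one>"
      "\<not> power_of G w1 w2" "\<not> power_of G w2 w1" for w1 w2
    using diff_edge_mult_coprime[OF that(1,2) b b_commute[OF that(1), symmetric] b_commute[OF that(2), symmetric]
        that(3,4) b_pow coprime_pq b_nontrivial that(5,6)] .
  show False
    using no_triangle[OF edge[OF a y a_pow y_pow a_y y_a] edge[OF y z y_pow z_pow y_z z_y]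
        edge[OF z a z_pow a_pow z_a a_z]] .
qed

lemma a_power_of_p_element:
  assumes x: "x \<in> carrier G" and "x [^] (p ^ i) = \<one>" and "x \<noteq> \<one>"
  shows "power_of G a x"
proof -
  obtain j where j: "x [^] (p ^ j) \<noteq> \<one>" "(x [^] (p ^ j)) [^] p = \<one>"
    using exists_pow_of_prime_exponent[OF x assms(2,3)] by blast
  then have "power_of G (x [^] (p ^ j)) a" using power_of_a_if_exponent_p x by simp
  then have "power_of G a (x [^] (p ^ j))" using power_of_prime_exponent[OF a p a_pow] j(1) by blast
  then show ?thesis using power_of_trans[OF _ power_of_pow_self x] by blast
qed

lemma diff_edge_p_element_ab:
  assumes x: "x \<in> carrier G" and x_pow: "x [^] (p ^ i) = \<one>"
    and "power_of G a x" and "\<not> power_of G x a"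
  shows "diff_edge G x (a \<otimes> b)"
proof -
  have ab: "a \<otimes> b = b \<otimes> a" using a_commute[OF b] .
  have coprime: "coprime (p ^ i) q" using coprime_pq by simp
  have "\<not> power_of G (a \<otimes> b) x"
  proof
    assume "power_of G (a \<otimes> b) x"
    then have "power_of G b x"
      using power_of_trans[OF power_of_mult_right[OF a b ab a_pow b_pow coprime_pq]] x by blast
    then have "b = \<one>"
      using eq_one_if_power_of_coprime[OF _ x x_pow b_pow] coprime by (simp add: coprime_commute)
    with b_nontrivial show False ..
  qed
  moreover have "\<not> power_of G x (a \<otimes> b)"
  proof
    assume "power_of G x (a \<otimes> b)"
    then have "power_of G x a" using power_of_mult_cancel[OF a b ab x_pow b_pow coprime] by blast
    with \<open>\<not> power_of G x a\<close> show False ..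
  qed
  moreover have "power_of G a (a \<otimes> b)" using power_of_mult_left[OF a b ab a_pow b_pow coprime_pq] .
  ultimately show ?thesis unfolding diff_edge_iff using x a b \<open>power_of G a x\<close> a_nontrivial by blast
qed

lemma p_elements_comparable:
  assumes x: "x \<in> carrier G" "x [^] (p ^ i) = \<one>" and y: "y \<in> carrier G" "y [^] (p ^ j) = \<one>"
  shows "power_of G x y \<or> power_of G y x"
proof (rule ccontr)
  assume incomparable: "\<not> (power_of G x y \<or> power_of G y x)"
  then have "x \<noteq> \<one>" "y \<noteq> \<one>" by auto
  then have ax: "power_of G a x" and ay: "power_of G a y" using a_power_of_p_element x y by blast+
  have "\<not> power_of G x a" using incomparable power_of_trans[OF _ ay] y by blast
  then have xab: "diff_edge G x (a \<otimes> b)" using diff_edge_p_element_ab x ax by blast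
  have "\<not> power_of G y a" using incomparable power_of_trans[OF _ ax] x by blast
  then have yab: "diff_edge G y (a \<otimes> b)" using diff_edge_p_element_ab y ay by blast
  have "diff_edge G x y" unfolding diff_edge_iff using x y incomparable ax ay a_nontrivial by blast
  then show False using no_triangle[OF _ yab diff_edge_sym[OF xab]] by blast
qed

text \<open>The p-elements are totally ordered by being a power, so one with the most powers has all of
  them as powers.\<close>

lemma p_element_generator:
  obtains u i where "u \<in> carrier G" "u [^] (p ^ i) = \<one>"
    and "\<And>x j. x \<in> carrier G \<Longrightarrow> x [^] (p ^ j) = \<one> \<Longrightarrow> power_of G x u"
proof -
  define S where "S = {x \<in> carrier G. \<exists>i. x [^] (p ^ i) = \<one>}"
  define f where "f x = card {z. power_of G z x}" for x
  have "finite S" using finite_carrier by (simp add: S_def)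
  moreover have "\<one> \<in> S" by (auto simp: S_def)
  ultimately have "Max (f ` S) \<in> f ` S" by (intro Max_in) auto
  then obtain u where u: "u \<in> S" "f u = Max (f ` S)" by auto
  have finite_powers: "finite {z. power_of G z x}" if "x \<in> carrier G" for x
    using power_of_closed[OF _ that] by (auto intro: finite_subset[OF _ finite_carrier])
  have "power_of G x u" if x: "x \<in> S" for x
  proof (rule ccontr)
    assume "\<not> power_of G x u"
    moreover have "x \<in> carrier G" "u \<in> carrier G" using x u(1) by (auto simp: S_def)
    ultimately have "power_of G u x" using p_elements_comparable x u(1) unfolding S_def by blast
    with \<open>\<not> power_of G x u\<close> have "{z. power_of G z u} \<subset> {z. power_of G z x}"
      using power_of_trans power_of_refl \<open>x \<in> carrier G\<close> by blast
    then have "f u < f x" unfolding f_def by (rule psubset_card_mono[OF finite_powers[OF \<open>x \<in> carrier G\<close>]])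
    moreover have "f x \<le> f u" using u(2) x \<open>finite S\<close> by simp
    ultimately show False by simp
  qed
  then show ?thesis using that u(1) unfolding S_def by blast
qed

lemma prime_exponent_eq_p_or_q:
  assumes g: "g \<in> carrier G" and r: "Factorial_Ring.prime r" and g_pow: "g [^] r = \<one>" and "g \<noteq> \<one>"
  shows "r = p \<or> r = q"
proof (rule ccontr)
  assume "\<not> (r = p \<or> r = q)"
  then have "coprime p r" "coprime q r" using primes_coprime p q r by auto
  then have cp: "coprime p (q * r)" and cq: "coprime q (p * r)" and cr: "coprime r (p * q)"
    using coprime_pq by (simp_all add: coprime_commute)
  have ag: "a \<otimes> g = g \<otimes> a" and bg: "b \<otimes> g = g \<otimes> b" and ab: "a \<otimes> b = b \<otimes> a"
    using a_commute b_commute g b by auto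
  have "a \<otimes> g \<in> carrier G" "b \<otimes> g \<in> carrier G" "a \<otimes> b \<in> carrier G" using a b g by auto
  moreover have "\<not> power_of G a (b \<otimes> g)"
    using eq_one_if_power_of_coprime[OF _ _ pow_mult_eq_one[OF b g bg b_pow g_pow] a_pow cp] a_nontrivial b g
    by auto
  moreover have "\<not> power_of G b (a \<otimes> g)"
    using eq_one_if_power_of_coprime[OF _ _ pow_mult_eq_one[OF a g ag a_pow g_pow] b_pow cq] b_nontrivial a g
    by auto
  moreover have "\<not> power_of G g (a \<otimes> b)"
    using eq_one_if_power_of_coprime[OF _ _ pow_mult_eq_one[OF a b ab a_pow b_pow] g_pow cr] \<open>g \<noteq> \<one>\<close> a b
    by auto
  moreover have "power_of G a (a \<otimes> g)" "power_of G g (a \<otimes> g)"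
    "power_of G b (b \<otimes> g)" "power_of G g (b \<otimes> g)"
    "power_of G a (a \<otimes> b)" "power_of G b (a \<otimes> b)"
    using power_of_mult_left[OF a g ag a_pow g_pow] power_of_mult_right[OF a g ag a_pow g_pow]
      power_of_mult_left[OF b g bg b_pow g_pow] power_of_mult_right[OF b g bg b_pow g_pow]
      power_of_mult_left[OF a b ab a_pow b_pow] power_of_mult_right[OF a b ab a_pow b_pow]
      \<open>coprime p r\<close> \<open>coprime q r\<close> coprime_pq by auto
  ultimately have "diff_edge G (a \<otimes> g) (b \<otimes> g)" "diff_edge G (b \<otimes> g) (a \<otimes> b)"
    "diff_edge G (a \<otimes> b) (a \<otimes> g)"
    unfolding diff_edge_iff using a_nontrivial b_nontrivial \<open>g \<noteq> \<one>\<close> power_of_trans by blast+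
  then show False using no_triangle by blast
qed

lemma order_eq_prime_powers:
  obtains i j where "order G = p ^ i * q ^ j"
proof -
  have "order G \<noteq> 0" using finite_carrier order_gt_0_iff_finite by auto
  moreover have "r = p \<or> r = q" if r: "Factorial_Ring.prime r" "r dvd order G" for r
  proof -
    obtain g where "g \<in> carrier G" "g \<noteq> \<one>" "g [^] r = \<one>"
      using exists_elem_of_prime_exponent[OF finite_carrier r] .
    then show ?thesis using prime_exponent_eq_p_or_q r(1) by blast
  qed
  ultimately show ?thesis using prime_powers_product[OF p q p_neq_q] that by blast
qed

lemma p_element_generator_ord:
  obtains u m where "u \<in> carrier G" "ord u = p ^ m" "1 \<le> m"
    and "\<And>x j. x \<in> carrier G \<Longrightarrow> x [^] (p ^ j) = \<one> \<Longrightarrow> power_of G x u"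
proof -
  obtain u i where u: "u \<in> carrier G" "u [^] (p ^ i) = \<one>"
    and u_gen: "\<And>x j. x \<in> carrier G \<Longrightarrow> x [^] (p ^ j) = \<one> \<Longrightarrow> power_of G x u"
    using p_element_generator by blast
  obtain m where m: "ord u = p ^ m" using u pow_eq_id divides_primepow_nat[OF p] by metis
  have "1 \<le> m"
  proof (rule ccontr)
    assume "\<not> 1 \<le> m"
    then have "ord u = 1" using m by simp
    then have "u = \<one>" using ord_eq_1 u(1) by blast
    moreover have "power_of G a u" using u_gen[of a 1] a a_pow by simp
    ultimately show False using a_nontrivial by (simp add: power_of_def)
  qed
  with u(1) m u_gen that show ?thesis by blast
qed

lemma cyclic_decomposition:
  obtains u v m n where "u \<in> carrier G" "v \<in> carrier G" "u \<otimes> v = v \<otimes> u"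
    "ord u = p ^ m" "ord v = q ^ n" "1 \<le> m" "1 \<le> n" "G \<cong> integer_mod_group (p ^ m * q ^ n)"
proof -
  obtain u m where u: "u \<in> carrier G" "ord u = p ^ m" "1 \<le> m"
    and u_gen: "\<And>x k. x \<in> carrier G \<Longrightarrow> x [^] (p ^ k) = \<one> \<Longrightarrow> power_of G x u"
    using p_element_generator_ord by blast
  obtain v n where v: "v \<in> carrier G" "ord v = q ^ n" "1 \<le> n"
    and v_gen: "\<And>x k. x \<in> carrier G \<Longrightarrow> x [^] (q ^ k) = \<one> \<Longrightarrow> power_of G x v"
    using bipartite_diff_graph_central.p_element_generator_ord[OF swapped] by blast
  have coprime: "coprime (p ^ k) (q ^ l)" for k l using coprime_pq by simp
  have u_pow: "u [^] (p ^ m) = \<one>" and v_pow: "v [^] (q ^ n) = \<one>"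
    using pow_ord_eq_1 u(1,2) v(1,2) by metis+
  have uv: "u \<otimes> v = v \<otimes> u"
  proof (rule commute_if_conjugates_power_of[OF u(1) v(1) u_pow v_pow coprime])
    show "power_of G (v \<otimes> u \<otimes> inv v) u" by (rule u_gen[of _ m]) (simp_all add: conj_pow u_pow u v)
    show "power_of G (u \<otimes> v \<otimes> inv u) v" by (rule v_gen[of _ n]) (simp_all add: conj_pow v_pow u v)
  qed
  obtain I J where order: "order G = p ^ I * q ^ J" by (rule order_eq_prime_powers)
  have "power_of G g (u \<otimes> v)" if "g \<in> carrier G" for g
    by (rule power_of_mult_if_coprime_parts[OF order coprime u(1) v(1) uv u_pow v_pow coprime _ _ that])
      (simp_all add: u_gen v_gen)
  then have "G \<cong> integer_mod_group (ord (u \<otimes> v))"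
    using iso_integer_mod_group_if_generator u(1) v(1) by simp
  then show ?thesis
    using that u v uv ord_mult_prime_powers(1)[OF p q p_neq_q u(1) v(1) uv u(2) v(2)] by simp
qed

lemma iso_integer_mod_group_prime_power_mult_prime:
  "\<exists>p q \<alpha> :: nat. Factorial_Ring.prime p \<and> Factorial_Ring.prime q \<and> p \<noteq> q \<and> \<alpha> \<ge> 1 \<and>
     G \<cong> integer_mod_group (p ^ \<alpha> * q)"
proof -
  obtain u v m n where "u \<in> carrier G" "v \<in> carrier G" "u \<otimes> v = v \<otimes> u"
    and "ord u = p ^ m" "1 \<le> m" "ord v = q ^ n" "1 \<le> n"
    and iso: "G \<cong> integer_mod_group (p ^ m * q ^ n)"
    by (rule cyclic_decomposition)
  then have "m = 1 \<or> n = 1" using prime_power_orders_le_one[OF p q p_neq_q] by fastforce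
  then show ?thesis
  proof
    assume "n = 1"
    then show ?thesis using iso p q p_neq_q \<open>1 \<le> m\<close> by auto
  next
    assume "m = 1"
    then have "G \<cong> integer_mod_group (q ^ n * p)" using iso by (simp add: mult.commute)
    then show ?thesis using p q p_neq_q \<open>1 \<le> n\<close> by auto
  qed
qed

end

lemma (in finite_group) iso_integer_mod_group_if_bipartite:
  assumes bipartite: "bipartite (diff_vertices G) (diff_edge G)"
    and p: "Factorial_Ring.prime p" and q: "Factorial_Ring.prime q" and "p \<noteq> q"
    and "p dvd card (group_center G)" and "q dvd card (group_center G)"
  shows "\<exists>p q \<alpha> :: nat. Factorial_Ring.prime p \<and> Factorial_Ring.prime q \<and> p \<noteq> q \<and> \<alpha> \<ge> 1 \<and>
    G \<cong> integer_mod_group (p ^ \<alpha> * q)"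
proof -
  obtain a where "a \<in> group_center G" "a \<noteq> \<one>" "a [^] p = \<one>"
    using exists_central_elem_of_prime_exponent[OF finite_carrier p \<open>p dvd card (group_center G)\<close>] .
  moreover obtain b where "b \<in> group_center G" "b \<noteq> \<one>" "b [^] q = \<one>"
    using exists_central_elem_of_prime_exponent[OF finite_carrier q \<open>q dvd card (group_center G)\<close>] .
  ultimately interpret bipartite_diff_graph_central G p q a b
    by unfold_locales (use bipartite p q \<open>p \<noteq> q\<close> in auto)
  show ?thesis by (rule iso_integer_mod_group_prime_power_mult_prime)
qed

theorem theorem7p5:
  fixes G :: "('a, 'b) monoid_scheme"
  assumes "group G" and "finite (carrier G)"
    and "\<exists>p q :: nat. Factorial_Ring.prime p \<and> Factorial_Ring.prime q \<and> p \<noteq> q \<and>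
           p dvd card (group_center G) \<and> q dvd card (group_center G)"
  shows "bipartite (diff_vertices G) (diff_edge G) \<longleftrightarrow>
    (\<exists>p q \<alpha> :: nat. Factorial_Ring.prime p \<and> Factorial_Ring.prime q \<and> p \<noteq> q \<and> \<alpha> \<ge> 1 \<and>
       G \<cong> integer_mod_group (p ^ \<alpha> * q))"
proof -
  interpret finite_group G using assms(1,2) by (simp add: finite_group_def finite_group_axioms_def)
  show ?thesis
  proof
    assume "bipartite (diff_vertices G) (diff_edge G)"
    then show "\<exists>p q \<alpha> :: nat. Factorial_Ring.prime p \<and> Factorial_Ring.prime q \<and> p \<noteq> q \<and> \<alpha> \<ge> 1 \<and>
        G \<cong> integer_mod_group (p ^ \<alpha> * q)"
      using iso_integer_mod_group_if_bipartite assms(3) by blast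
  next
    assume "\<exists>p q \<alpha> :: nat. Factorial_Ring.prime p \<and> Factorial_Ring.prime q \<and> p \<noteq> q \<and> \<alpha> \<ge> 1 \<and>
        G \<cong> integer_mod_group (p ^ \<alpha> * q)"
    then obtain p q \<alpha> \<phi> where "Factorial_Ring.prime p" "Factorial_Ring.prime q"
      "\<phi> \<in> iso G (integer_mod_group (p ^ \<alpha> * q))"
      unfolding is_iso_def by blast
    then show "bipartite (diff_vertices G) (diff_edge G)"
      by (rule bipartite_diff_graph_if_iso_prime_power_mult_prime)
  qed
qed

end
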